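(* Let $g(t)=\sum_{n\ge0}g_nt^n$ be a rational function regular for $|t|<1$ having a pole at $t=1$ whose order is maximal among the orders of the poles of $g$. Let $p(t),q(t)$ be polynomials with $q(1)\ne0$, and let $s(t)=p(t)g(t)=\sum_ns_nt^n$ and $d(t)=q(t)g(t)=\sum_nd_nt^n$. Then the limits $$\lim_{t\to1^-}\frac{s(t)}{d(t)},\qquad\lim_{N\to\infty}\frac{\sum_{n\le N}s_n}{\sum_{n\le N}d_n}$$ both exist and equal $p(1)/q(1)$. *)

theory Defs
  imports Complex_Main "HOL-Computational_Algebra.Polynomial_FPS"
begin

definition rat_fun :: "complex poly \<Rightarrow> complex poly \<Rightarrow> complex \<Rightarrow> complex" where
  "rat_fun P Q t = poly P t / poly Q t"

text \<open>Its Taylor series at 0 (meaningful when Q(0) is nonzero).\<close>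
definition rat_fps :: "complex poly \<Rightarrow> complex poly \<Rightarrow> complex fps" where
  "rat_fps P Q = fps_of_poly P / fps_of_poly Q"

end

theory Submission
  imports
    Defs
    "HOL-Computational_Algebra.Fundamental_Theorem_Algebra"
    "HOL-Computational_Algebra.Polynomial_Factorial"
    "HOL-Computational_Algebra.Field_as_Ring"
begin

(* Near t = 1 the common factor g cancels, so s(t)/d(t) = p(t)/q(t) there, which gives the
   first limit. The partial sums S_N and D_N are the coefficients of p g / (1 - t) and
   q g / (1 - t). By partial fractions, the coefficients of a rational series R/Q whose poles
   lie in |t| >= 1, those on |t| = 1 of order at most m, are O(N^(m-1)). Let m be the order of
   the pole at 1. The cross difference q(1) S_N - p(1) D_N is the coefficient sequence of such a
   series, because its numerator vanishes at 1 and the factor 1 - t cancels the summation;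
   whereas D_N = c binom(N + m, N) + O(N^(m-1)) with c nonzero grows like N^m. *)

unbundle fps_syntax

definition poly_growth :: "nat \<Rightarrow> (nat \<Rightarrow> 'a::real_normed_vector) \<Rightarrow> bool" where
  "poly_growth k f \<longleftrightarrow> (\<exists>C. \<forall>n. norm (f n) \<le> C * (real n + 1) ^ k)"

lemma poly_growthE:
  assumes "poly_growth k f"
  obtains C where "C \<ge> 0" "\<And>n. norm (f n) \<le> C * (real n + 1) ^ k"
proof -
  obtain C where C: "\<And>n. norm (f n) \<le> C * (real n + 1) ^ k"
    using assms unfolding poly_growth_def by blast
  have "C \<ge> 0" using C[of 0] by simp (meson norm_ge_zero order_trans)
  then show ?thesis using C by (rule that)
qed

lemma poly_growthI: "(\<And>n. norm (f n) \<le> C * (real n + 1) ^ k) \<Longrightarrow> poly_growth k f"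
  unfolding poly_growth_def by blast

lemma poly_growth_mono:
  assumes "poly_growth j f" "j \<le> k"
  shows "poly_growth k f"
proof -
  obtain C where "C \<ge> 0" and C: "\<And>n. norm (f n) \<le> C * (real n + 1) ^ j"
    using assms(1) by (metis poly_growthE)
  have "C * (real n + 1) ^ j \<le> C * (real n + 1) ^ k" for n
    using \<open>C \<ge> 0\<close> assms(2) by (intro mult_left_mono power_increasing) auto
  with C show ?thesis by (meson order_trans poly_growthI)
qed

lemma poly_growth_add:
  assumes "poly_growth k f" "poly_growth k g"
  shows "poly_growth k (\<lambda>n. f n + g n)"
proof -
  obtain C D where C: "\<And>n. norm (f n) \<le> C * (real n + 1) ^ k"
    and D: "\<And>n. norm (g n) \<le> D * (real n + 1) ^ k"
    using assms by (meson poly_growthE)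
  have "norm (f n + g n) \<le> (C + D) * (real n + 1) ^ k" for n
    using norm_triangle_le[OF add_mono[OF C D]] by (simp add: distrib_right)
  then show ?thesis by (rule poly_growthI)
qed

lemma poly_growth_partial_sums:
  assumes "poly_growth k f"
  shows "poly_growth (Suc k) (\<lambda>n. \<Sum>i\<le>n. f i)"
proof -
  obtain C where "C \<ge> 0" and C: "\<And>n. norm (f n) \<le> C * (real n + 1) ^ k"
    using assms by (metis poly_growthE)
  have "norm (\<Sum>i\<le>n. f i) \<le> C * (real n + 1) ^ Suc k" for n
  proof -
    have "norm (\<Sum>i\<le>n. f i) \<le> (\<Sum>i\<le>n. C * (real n + 1) ^ k)"
    proof (rule sum_norm_le)
      fix i assume "i \<in> {..n}"
      then have "C * (real i + 1) ^ k \<le> C * (real n + 1) ^ k"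
        using \<open>C \<ge> 0\<close> by (intro mult_left_mono power_mono) auto
      with C show "norm (f i) \<le> C * (real n + 1) ^ k" by (rule order_trans)
    qed
    then show ?thesis by (simp add: algebra_simps)
  qed
  then show ?thesis by (rule poly_growthI)
qed

lemma poly_growth_partial_sums_summable:
  assumes "summable (\<lambda>n. norm (f n))"
  shows "poly_growth 0 (\<lambda>n. \<Sum>i\<le>n. norm (f i))"
  by (rule poly_growthI[of _ "\<Sum>n. norm (f n)"])
    (simp add: assms sum_le_suminf sum_nonneg)

lemma poly_growth_fps_mult:
  fixes A B :: "'a::real_normed_algebra fps"
  assumes "poly_growth j (\<lambda>n. \<Sum>i\<le>n. norm (A $ i))" "poly_growth k (fps_nth B)"
  shows "poly_growth (j + k) (fps_nth (A * B))"
proof -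
  obtain C where C: "\<And>n. norm (\<Sum>i\<le>n. norm (A $ i)) \<le> C * (real n + 1) ^ j"
    using assms(1) by (metis poly_growthE)
  obtain D where "D \<ge> 0" and D: "\<And>n. norm (B $ n) \<le> D * (real n + 1) ^ k"
    using assms(2) by (metis poly_growthE)
  have "norm ((A * B) $ n) \<le> (C * D) * (real n + 1) ^ (j + k)" for n
  proof -
    have "norm ((A * B) $ n) \<le> (\<Sum>i\<le>n. norm (A $ i) * (D * (real n + 1) ^ k))"
      unfolding fps_mult_nth atLeast0AtMost
    proof (rule sum_norm_le)
      fix i assume "i \<in> {..n}"
      then have "D * (real (n - i) + 1) ^ k \<le> D * (real n + 1) ^ k"
        using \<open>D \<ge> 0\<close> by (intro mult_left_mono power_mono) auto
      with D have "norm (B $ (n - i)) \<le> D * (real n + 1) ^ k" by (rule order_trans)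
      then show "norm (A $ i * B $ (n - i)) \<le> norm (A $ i) * (D * (real n + 1) ^ k)"
        by (rule order_trans[OF norm_mult_ineq mult_left_mono]) simp
    qed
    also have "\<dots> = (\<Sum>i\<le>n. norm (A $ i)) * D * (real n + 1) ^ k"
      by (simp add: sum_distrib_right mult.assoc)
    also have "\<dots> \<le> C * (real n + 1) ^ j * D * (real n + 1) ^ k"
      using C[of n] \<open>D \<ge> 0\<close> by (intro mult_right_mono) (auto simp: sum_nonneg)
    finally show ?thesis by (simp add: power_add mult_ac)
  qed
  then show ?thesis by (rule poly_growthI)
qed

lemma poly_growth_fps_of_poly:
  "poly_growth 0 (\<lambda>n. \<Sum>i\<le>n. norm (fps_of_poly p $ i))"
  by (rule poly_growth_partial_sums_summable, rule summable_finite[of "{..degree p}"])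
    (auto simp: coeff_eq_0)

lemma fps_inverse_linear:
  fixes z :: "'a::field"
  assumes "z \<noteq> 0"
  shows "inverse (fps_of_poly [:-z, 1:]) = Abs_fps (\<lambda>n. - (inverse z ^ Suc n))"
proof (rule fps_inverse_unique, rule fps_ext)
  fix n
  show "(fps_of_poly [:-z, 1:] * Abs_fps (\<lambda>n. - (inverse z ^ Suc n))) $ n = 1 $ n"
    using assms by (cases n) (simp_all add: fps_of_poly_pCons algebra_simps)
qed

lemma poly_growth_inverse_linear_power_unit_circle:
  fixes z :: complex
  assumes "cmod z = 1"
  shows "poly_growth e (fps_nth (inverse (fps_of_poly [:-z, 1:]) ^ Suc e))"
proof -
  define G where "G = inverse (fps_of_poly [:-z, 1:])"
  have "z \<noteq> 0" using assms by auto
  then have norm_G: "norm (G $ n) = 1" for n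
    using assms by (simp add: G_def fps_inverse_linear norm_power norm_mult norm_inverse del: power_Suc)
  have sums: "poly_growth (Suc 0) (\<lambda>n. \<Sum>i\<le>n. norm (G $ i))"
    by (rule poly_growth_partial_sums, rule poly_growthI[of _ 1]) (simp add: norm_G)
  have "poly_growth e (fps_nth (G ^ Suc e))"
  proof (induction e)
    case 0
    show ?case by (rule poly_growthI[of _ 1]) (simp add: norm_G)
  next
    case (Suc e)
    from poly_growth_fps_mult[OF sums Suc] show ?case by simp
  qed
  then show ?thesis by (simp add: G_def)
qed

lemma poly_growth_inverse_linear_power_outside:
  fixes z :: complex
  assumes "cmod z > 1"
  shows "poly_growth 0 (fps_nth (inverse (fps_of_poly [:-z, 1:]) ^ e))"
proof -
  define G where "G = inverse (fps_of_poly [:-z, 1:])"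
  have "z \<noteq> 0" using assms by auto
  then have "norm (G $ n) = inverse (cmod z) ^ Suc n" for n
    by (simp add: G_def fps_inverse_linear norm_power norm_inverse del: power_Suc)
  moreover have "summable (\<lambda>n. inverse (cmod z) ^ Suc n)"
    unfolding power_Suc using assms
    by (intro summable_mult summable_geometric) (auto simp: inverse_less_1_iff)
  ultimately have sums: "poly_growth 0 (\<lambda>n. \<Sum>i\<le>n. norm (G $ i))"
    by (intro poly_growth_partial_sums_summable) simp
  have "poly_growth 0 (fps_nth (G ^ e))"
  proof (induction e)
    case 0
    show ?case by (rule poly_growthI[of _ 1]) (simp add: fps_one_nth)
  next
    case (Suc e)
    from poly_growth_fps_mult[OF sums Suc] show ?case by simp
  qed
  then show ?thesis by (simp add: G_def)
qed

lemma fps_partial_fractions: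
  fixes L M R X Y :: "'a::field poly"
  assumes "X * L + Y * M = 1" "poly L 0 \<noteq> 0" "poly M 0 \<noteq> 0"
  shows "fps_of_poly R / fps_of_poly (L * M) =
    fps_of_poly (R * X) / fps_of_poly M + fps_of_poly (R * Y) / fps_of_poly L"
proof -
  have unit: "fps_of_poly L $ 0 \<noteq> 0" "fps_of_poly M $ 0 \<noteq> 0" "fps_of_poly (L * M) $ 0 \<noteq> 0"
    using assms(2,3) by (simp_all add: poly_0_coeff_0 coeff_mult_0)
  have "fps_of_poly X * fps_of_poly L + fps_of_poly Y * fps_of_poly M = 1"
    using arg_cong[OF assms(1), of fps_of_poly] by (simp add: fps_of_poly_add fps_of_poly_mult)
  then have "fps_of_poly R * inverse (fps_of_poly L * fps_of_poly M) =
      fps_of_poly R * inverse (fps_of_poly L * fps_of_poly M) *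
      (fps_of_poly X * fps_of_poly L + fps_of_poly Y * fps_of_poly M)"
    by simp
  also have "\<dots> = fps_of_poly R * fps_of_poly X * inverse (fps_of_poly M) *
        (fps_of_poly L * inverse (fps_of_poly L)) +
      fps_of_poly R * fps_of_poly Y * inverse (fps_of_poly L) *
        (fps_of_poly M * inverse (fps_of_poly M))"
    by (simp add: fps_inverse_mult algebra_simps)
  finally show ?thesis
    using unit by (simp add: fps_divide_unit fps_of_poly_mult inverse_mult_eq_1')
qed

lemma poly_growth_inverse_linear_power:
  fixes z :: complex
  assumes "cmod z \<ge> 1" "cmod z = 1 \<Longrightarrow> e \<le> Suc k"
  shows "poly_growth k (fps_nth (inverse (fps_of_poly [:-z, 1:]) ^ e))"
proof (cases "cmod z = 1")
  case True
  show ?thesis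
  proof (cases e)
    case 0
    show ?thesis by (rule poly_growthI[of _ 1]) (simp add: 0 fps_one_nth)
  next
    case (Suc e')
    with True assms(2) show ?thesis
      using poly_growth_mono[OF poly_growth_inverse_linear_power_unit_circle[OF True, of e']]
      by simp
  qed
next
  case False
  with assms(1) have "cmod z > 1" by simp
  from poly_growth_inverse_linear_power_outside[OF this, of e] show ?thesis
    by (rule poly_growth_mono) simp
qed

lemma rat_fps_partial_fractions:
  fixes P L M :: "complex poly"
  assumes "coprime L M" "poly L 0 \<noteq> 0" "poly M 0 \<noteq> 0"
  obtains X Y where "rat_fps P (L * M) = rat_fps (P * X) M + rat_fps (P * Y) L"
proof -
  obtain X Y where "X * L + Y * M = 1"
    using assms(1) by (metis bezout_coefficients_fst_snd coprime_iff_gcd_eq_1)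
  from fps_partial_fractions[OF this assms(2,3), of P] show ?thesis
    by (intro that) (simp add: rat_fps_def)
qed

lemma poly_growth_rat_fps_linear_power:
  fixes z :: complex
  assumes "cmod z \<ge> 1" "cmod z = 1 \<Longrightarrow> e \<le> Suc k"
  shows "poly_growth k (fps_nth (rat_fps P ([:-z, 1:] ^ e)))"
proof -
  have "z \<noteq> 0" using assms(1) by auto
  then have "rat_fps P ([:-z, 1:] ^ e) = fps_of_poly P * inverse (fps_of_poly [:-z, 1:]) ^ e"
    by (simp add: rat_fps_def fps_divide_unit fps_of_poly_power fps_inverse_power)
  with poly_growth_fps_mult[OF poly_growth_fps_of_poly poly_growth_inverse_linear_power[OF assms]]
  show ?thesis by simp
qed

lemma poly_growth_rat_fps:
  fixes P Q :: "complex poly"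
  assumes "poly Q 0 \<noteq> 0"
    and "\<And>z. poly Q z = 0 \<Longrightarrow> cmod z \<ge> 1"
    and "\<And>z. poly Q z = 0 \<Longrightarrow> cmod z = 1 \<Longrightarrow> order z Q \<le> Suc k"
  shows "poly_growth k (fps_nth (rat_fps P Q))"
  using assms
proof (induction "degree Q" arbitrary: P Q rule: less_induct)
  case less
  show ?case
  proof (cases "\<exists>z. poly Q z = 0")
    case False
    then obtain c where "Q = [:c:]"
      by (meson constant_degree degree_eq_zeroE fundamental_theorem_of_algebra)
    then have "rat_fps P Q = fps_of_poly P * fps_const (inverse c)"
      using less.prems(1) by (simp add: rat_fps_def fps_of_poly_const fps_divide_unit fps_const_inverse)
    moreover have "poly_growth 0 (fps_nth (fps_const (inverse c)))"
      by (rule poly_growthI[of _ "cmod (inverse c)"]) simp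
    ultimately show ?thesis
      using poly_growth_fps_mult[OF poly_growth_fps_of_poly] by (auto intro: poly_growth_mono)
  next
    case True
    then obtain z where z: "poly Q z = 0" by blast
    define e where "e = order z Q"
    have "Q \<noteq> 0" using less.prems(1) by auto
    then obtain Q' where Q': "Q = [:-z, 1:] ^ e * Q'" and ndvd: "\<not> [:-z, 1:] dvd Q'"
      unfolding e_def by (metis order_decomp)
    have "coprime [:-z, 1:] Q'"
      by (rule prime_elem_imp_coprime[OF prime_elem_linear_field_poly]) (simp_all add: ndvd)
    then have "coprime ([:-z, 1:] ^ e) Q'"
      by simp
    then obtain X Y where split: "rat_fps P Q = rat_fps (P * X) Q' + rat_fps (P * Y) ([:-z, 1:] ^ e)"
      using less.prems(1) unfolding Q' by (elim rat_fps_partial_fractions) auto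
    have "e \<ge> 1" using order_root[of Q z] z \<open>Q \<noteq> 0\<close> by (simp add: e_def)
    then have "degree Q' < degree Q"
      using \<open>Q \<noteq> 0\<close> by (simp add: Q' degree_mult_eq degree_power_eq)
    moreover have "order w Q' \<le> order w Q" for w
      using \<open>Q \<noteq> 0\<close> by (simp add: Q' order_mult)
    ultimately have "poly_growth k (fps_nth (rat_fps (P * X) Q'))"
      using less.prems by (intro less.hyps) (auto simp: Q' intro: le_trans)
    moreover have "poly_growth k (fps_nth (rat_fps (P * Y) ([:-z, 1:] ^ e)))"
      using less.prems(2,3)[OF z] by (intro poly_growth_rat_fps_linear_power) (auto simp: e_def)
    ultimately show ?thesis
      using poly_growth_add by (simp add: split fps_plus_def Abs_fps_inverse)
  qed
qed

lemma fps_nth_mult_inverse_one_minus_X: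
  fixes F :: "'a::field fps"
  shows "(F * inverse (1 - fps_X)) $ N = (\<Sum>n\<le>N. F $ n)"
  using fps_divide_fps_X_minus1_sum[of F] by (simp add: fps_divide_unit atLeast0AtMost)

lemma fps_nth_inverse_one_minus_X_power:
  "(inverse (1 - fps_X) ^ Suc k :: 'a::field fps) $ N = of_nat ((k + N) choose N)"
proof (induction k arbitrary: N)
  case 0
  show ?case by (simp add: fps_inverse_one_minus_fps_X)
next
  case (Suc k)
  have "(inverse (1 - fps_X) ^ Suc (Suc k) :: 'a fps) $ N =
      (\<Sum>n\<le>N. of_nat ((k + n) choose n))"
    by (simp only: power_Suc2[of _ "Suc k"] fps_nth_mult_inverse_one_minus_X Suc)
  also have "\<dots> = of_nat ((Suc k + N) choose N)"
    by (simp only: of_nat_sum[symmetric] sum_choose_lower) simp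
  finally show ?case .
qed

lemma fps_of_poly_linear_1:
  "fps_of_poly [:-1, 1:] = fps_const (- 1) * (1 - fps_X :: 'a::comm_ring_1 fps)"
  by (simp add: fps_of_poly_pCons algebra_simps)

lemma fps_mult_linear_factor_1_inverse_one_minus_X:
  fixes R :: "'a::field poly"
  shows "fps_of_poly ([:-1, 1:] * R) * F * inverse (1 - fps_X) = fps_of_poly (- R) * F"
proof -
  have "fps_of_poly ([:-1, 1:] * R) * F * inverse (1 - fps_X) =
      fps_const (- 1) * (fps_of_poly R * F) * ((1 - fps_X) * inverse (1 - fps_X))"
    by (simp only: fps_of_poly_mult fps_of_poly_linear_1 mult_ac)
  then show ?thesis
    by (simp add: inverse_mult_eq_1' fps_of_poly_uminus fps_eq_iff)
qed

lemma rat_fps_eq_mult_inverse: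
  "poly Q 0 \<noteq> 0 \<Longrightarrow> rat_fps P Q = fps_of_poly P * inverse (fps_of_poly Q)"
  by (simp add: rat_fps_def fps_divide_unit poly_0_coeff_0)

lemma rat_fps_pole_at_1:
  assumes "poly Q0 0 \<noteq> 0"
  shows "rat_fps Q0 ([:-1, 1:] ^ m * Q0) = fps_const ((- 1) ^ m) * inverse (1 - fps_X) ^ m"
proof -
  have "poly ([:-1, 1:] ^ m * Q0) 0 \<noteq> 0"
    using assms by simp
  moreover have "fps_of_poly Q0 * inverse (fps_of_poly Q0) = 1"
    using assms by (simp add: inverse_mult_eq_1' poly_0_coeff_0)
  ultimately show ?thesis
    by (simp add: rat_fps_eq_mult_inverse fps_of_poly_mult fps_of_poly_power fps_of_poly_linear_1
        fps_inverse_mult fps_inverse_power fps_const_inverse power_mult_distrib fps_const_power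
        power_inverse[symmetric] mult_ac)
qed

lemma binomial_ge_power:
  "((real n + 1) / real (Suc k)) ^ Suc k \<le> real ((Suc k + n) choose n)"
proof -
  have "((real n + 1) / real (Suc k)) ^ Suc k \<le> (real (Suc k + n) / real (Suc k)) ^ Suc k"
    by (intro power_mono divide_right_mono) auto
  also have "\<dots> \<le> real ((Suc k + n) choose Suc k)"
    by (rule binomial_ge_n_over_k_pow_k) simp
  finally show ?thesis
    by (simp add: binomial_symmetric[of n "Suc k + n", simplified])
qed

lemma eventually_norm_binomial_plus_lower_order_ge:
  fixes w :: "nat \<Rightarrow> 'a::real_normed_field"
  assumes "poly_growth k w" "c \<noteq> 0"
  shows "\<exists>\<kappa>>0. eventually (\<lambda>N. \<kappa> * (real N + 1) ^ Suc k \<le>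
      norm (c * of_nat ((Suc k + N) choose N) + w N)) sequentially"
proof -
  obtain C where C: "\<And>N. norm (w N) \<le> C * (real N + 1) ^ k"
    using assms(1) by (metis poly_growthE)
  define M where "M = real (Suc k) ^ Suc k"
  define \<kappa> where "\<kappa> = norm c / (2 * M)"
  have "M > 0" "\<kappa> > 0" using assms(2) by (simp_all add: M_def \<kappa>_def)
  obtain N0 :: nat where N0: "real N0 \<ge> C / \<kappa>" using real_arch_simple by blast
  have "\<kappa> * (real N + 1) ^ Suc k \<le> norm (c * of_nat ((Suc k + N) choose N) + w N)"
    if "N \<ge> N0" for N
  proof -
    define x where "x = real N + 1"
    have "x > 0" by (simp add: x_def)
    have "C \<le> \<kappa> * real N0" using N0 \<open>\<kappa> > 0\<close> by (simp add: field_simps)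
    also have "\<dots> \<le> \<kappa> * x" using that \<open>\<kappa> > 0\<close> by (simp add: x_def)
    finally have "C * x ^ k \<le> \<kappa> * x ^ Suc k"
      using \<open>x > 0\<close> by (simp add: mult_right_mono mult.assoc)
    moreover have "norm c * (x ^ Suc k / M) = 2 * \<kappa> * x ^ Suc k"
      using \<open>M > 0\<close> by (simp add: \<kappa>_def)
    ultimately have "\<kappa> * x ^ Suc k \<le> norm c * (x ^ Suc k / M) - C * x ^ k"
      by linarith
    also have "\<dots> \<le> norm c * real ((Suc k + N) choose N) - norm (w N)"
      using binomial_ge_power[of N k] C[of N]
      by (intro diff_mono mult_left_mono) (simp_all add: x_def M_def power_divide)
    also have "\<dots> \<le> norm (c * of_nat ((Suc k + N) choose N) + w N)"
      using norm_diff_ineq[of "c * of_nat ((Suc k + N) choose N)" "w N"]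
      by (simp add: norm_mult)
    finally show ?thesis by (simp add: x_def)
  qed
  then have "eventually (\<lambda>N. \<kappa> * (real N + 1) ^ Suc k \<le>
      norm (c * of_nat ((Suc k + N) choose N) + w N)) sequentially"
    by (rule eventually_sequentiallyI)
  with \<open>\<kappa> > 0\<close> show ?thesis by blast
qed

lemma tendsto_zero_if_poly_growth_below:
  fixes u B :: "nat \<Rightarrow> 'a::real_normed_field"
  assumes "poly_growth k u" "\<kappa> > 0"
    and "eventually (\<lambda>N. \<kappa> * (real N + 1) ^ Suc k \<le> norm (B N)) sequentially"
  shows "(\<lambda>N. u N / B N) \<longlonglongrightarrow> 0"
proof -
  obtain C where "C \<ge> 0" and C: "\<And>N. norm (u N) \<le> C * (real N + 1) ^ k"
    using assms(1) by (metis poly_growthE)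
  have "eventually (\<lambda>N. norm (u N / B N) \<le> norm (inverse (real (Suc N))) * (C / \<kappa>)) sequentially"
    using assms(3)
  proof eventually_elim
    case (elim N)
    have pos: "\<kappa> * (real N + 1) ^ Suc k > 0" using \<open>\<kappa> > 0\<close> by simp
    have "norm (u N / B N) \<le> C * (real N + 1) ^ k / (\<kappa> * (real N + 1) ^ Suc k)"
      unfolding norm_divide using C[of N] elim pos \<open>C \<ge> 0\<close>
      by (intro frac_le) auto
    also have "\<dots> = inverse (real (Suc N)) * (C / \<kappa>)"
      using \<open>\<kappa> > 0\<close> by (simp add: divide_simps)
    finally show ?case by simp
  qed
  then show ?thesis by (rule tendsto_0_le[OF LIMSEQ_inverse_real_of_nat])
qed

lemma tendsto_ratio_if_error_negligible:
  fixes A B :: "nat \<Rightarrow> 'a::real_normed_field"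
  assumes "(\<lambda>N. (b * A N - a * B N) / B N) \<longlonglongrightarrow> 0"
    and "eventually (\<lambda>N. B N \<noteq> 0) sequentially" "b \<noteq> 0"
  shows "(\<lambda>N. A N / B N) \<longlonglongrightarrow> a / b"
proof -
  have "(\<lambda>N. ((b * A N - a * B N) / B N + a) / b) \<longlonglongrightarrow> (0 + a) / b"
    using assms(1,3) by (intro tendsto_intros) auto
  moreover have "eventually (\<lambda>N. ((b * A N - a * B N) / B N + a) / b = A N / B N) sequentially"
    using assms(2) by eventually_elim (use assms(3) in \<open>simp add: field_simps\<close>)
  ultimately show ?thesis by (simp add: Lim_transform_eventually)
qed

lemma tendsto_ratio_binomial_denominator:
  fixes A B w :: "nat \<Rightarrow> 'a::real_normed_field"
  assumes "poly_growth k (\<lambda>N. b * A N - a * B N)" "poly_growth k w"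
    and "\<And>N. B N = c * of_nat ((Suc k + N) choose N) + w N" "c \<noteq> 0" "b \<noteq> 0"
  shows "(\<lambda>N. A N / B N) \<longlonglongrightarrow> a / b"
proof -
  obtain \<kappa> where "\<kappa> > 0"
    and lower: "eventually (\<lambda>N. \<kappa> * (real N + 1) ^ Suc k \<le> norm (B N)) sequentially"
    using eventually_norm_binomial_plus_lower_order_ge[OF assms(2,4)] by (auto simp: assms(3))
  have pos: "\<kappa> * (real N + 1) ^ Suc k > 0" for N
    using \<open>\<kappa> > 0\<close> by simp
  have "eventually (\<lambda>N. B N \<noteq> 0) sequentially"
    using lower by (rule eventually_mono) (metis pos norm_zero not_le)
  with tendsto_zero_if_poly_growth_below[OF assms(1) \<open>\<kappa> > 0\<close> lower] show ?thesis
    using assms(5) by (rule tendsto_ratio_if_error_negligible)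
qed

lemma poly_nonzero_if_coprime_root:
  fixes P Q :: "'a::field poly"
  assumes "coprime P Q" "poly Q z = 0"
  shows "poly P z \<noteq> 0"
proof
  assume "poly P z = 0"
  with assms(2) have "[:-z, 1:] dvd P" "[:-z, 1:] dvd Q"
    by (simp_all add: poly_eq_0_iff_dvd)
  with assms(1) have "is_unit [:-z, 1:]"
    by (rule coprime_common_divisor)
  then show False
    by (simp add: is_unit_iff_degree)
qed

lemma rat_fun_ratio_tendsto_at_left_1:
  assumes "poly P 1 \<noteq> 0" "poly q 1 \<noteq> 0"
    and "\<And>x. x \<in> {0<..<1} \<Longrightarrow> poly Q (of_real x) \<noteq> 0"
  shows "((\<lambda>x::real. (poly p (of_real x) * rat_fun P Q (of_real x)) /
      (poly q (of_real x) * rat_fun P Q (of_real x))) \<longlongrightarrow> poly p 1 / poly q 1) (at_left 1)"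
proof -
  have to_1: "((\<lambda>x::real. complex_of_real x) \<longlongrightarrow> 1) (at_left 1)"
    by (auto intro!: tendsto_eq_intros)
  have "eventually (\<lambda>x::real. poly P (of_real x) \<noteq> 0 \<and> poly q (of_real x) \<noteq> 0 \<and> x \<in> {0<..<1})
      (at_left 1)"
    using tendsto_imp_eventually_ne[OF tendsto_poly[OF to_1] assms(1)]
      tendsto_imp_eventually_ne[OF tendsto_poly[OF to_1] assms(2)]
      eventually_at_left_real[OF zero_less_one]
    by eventually_elim simp
  then have "eventually (\<lambda>x::real. poly p (of_real x) / poly q (of_real x) =
      (poly p (of_real x) * rat_fun P Q (of_real x)) / (poly q (of_real x) * rat_fun P Q (of_real x)))
      (at_left 1)"
    by eventually_elim (use assms(3) in \<open>auto simp: rat_fun_def\<close>)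
  moreover have "((\<lambda>x::real. poly p (of_real x) / poly q (of_real x)) \<longlongrightarrow> poly p 1 / poly q 1)
      (at_left 1)"
    using assms(2) by (intro tendsto_divide tendsto_poly to_1)
  ultimately show ?thesis
    by (rule Lim_transform_eventually[rotated])
qed

lemma partial_sums_rat_fps:
  "poly Q 0 \<noteq> 0 \<Longrightarrow>
    (\<Sum>n\<le>N. rat_fps R Q $ n) = (fps_of_poly R * inverse (fps_of_poly Q) * inverse (1 - fps_X)) $ N"
  by (simp add: fps_nth_mult_inverse_one_minus_X rat_fps_eq_mult_inverse)

lemma partial_sums_rat_fps_cross_difference:
  assumes "poly Q 0 \<noteq> 0"
  obtains R where "\<And>N. poly V 1 * (\<Sum>n\<le>N. rat_fps U Q $ n) - poly U 1 * (\<Sum>n\<le>N. rat_fps V Q $ n) =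
    rat_fps R Q $ N"
proof -
  define E where "E = inverse (fps_of_poly Q)"
  have "poly (smult (poly V 1) U - smult (poly U 1) V) 1 = 0" by simp
  then have "[:-1, 1:] dvd smult (poly V 1) U - smult (poly U 1) V"
    by (simp only: poly_eq_0_iff_dvd)
  then obtain R where R: "smult (poly V 1) U - smult (poly U 1) V = [:-1, 1:] * R"
    by (rule dvdE)
  have "fps_const (poly V 1) * (fps_of_poly U * E * inverse (1 - fps_X)) -
      fps_const (poly U 1) * (fps_of_poly V * E * inverse (1 - fps_X)) =
      fps_of_poly ([:-1, 1:] * R) * E * inverse (1 - fps_X)"
    unfolding R[symmetric] fps_of_poly_diff fps_of_poly_smult by (simp add: algebra_simps)
  also have "\<dots> = fps_of_poly (- R) * E"
    by (rule fps_mult_linear_factor_1_inverse_one_minus_X)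
  finally show ?thesis
    using assms by (intro that[of "- R"])
      (metis E_def partial_sums_rat_fps rat_fps_eq_mult_inverse fps_mult_left_const_nth fps_sub_nth)
qed

lemma partial_sums_rat_fps_pole_at_1:
  assumes "Q = [:-1, 1:] ^ Suc k * Q0" "poly Q0 0 \<noteq> 0" "poly Q0 1 \<noteq> 0" "poly V 1 \<noteq> 0"
  obtains c W where "c \<noteq> 0"
    and "\<And>N. (\<Sum>n\<le>N. rat_fps V Q $ n) = c * of_nat ((Suc k + N) choose N) + rat_fps W Q $ N"
proof -
  define E where "E = inverse (fps_of_poly Q)"
  define I where "I = (inverse (1 - fps_X) :: complex fps)"
  have "poly Q 0 \<noteq> 0" using assms(1,2) by simp
  define c where "c = poly V 1 / poly Q0 1"
  have "poly (V - smult c Q0) 1 = 0" using assms(3) by (simp add: c_def)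
  then have "[:-1, 1:] dvd V - smult c Q0"
    by (simp only: poly_eq_0_iff_dvd)
  then obtain W where "V - smult c Q0 = [:-1, 1:] * W"
    by (rule dvdE)
  then have W: "V = smult c Q0 + [:-1, 1:] * W"
    by (simp add: algebra_simps)
  have "fps_of_poly Q0 * E = fps_const ((- 1) ^ Suc k) * I ^ Suc k"
    using rat_fps_eq_mult_inverse[OF \<open>poly Q 0 \<noteq> 0\<close>, of Q0] rat_fps_pole_at_1[OF assms(2), of "Suc k"]
    unfolding E_def I_def assms(1) by simp
  then have decomp: "fps_of_poly V * E * I =
      fps_const c * (fps_const ((- 1) ^ Suc k) * (I ^ Suc k * I)) + fps_of_poly (- W) * E"
    unfolding W fps_of_poly_add fps_of_poly_smult distrib_right I_def
      fps_mult_linear_factor_1_inverse_one_minus_X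
    by (simp only: mult.assoc)
  have "(\<Sum>n\<le>N. rat_fps V Q $ n) = (fps_of_poly V * E * I) $ N" for N
    by (simp add: partial_sums_rat_fps[OF \<open>poly Q 0 \<noteq> 0\<close>] E_def I_def)
  also have "(fps_of_poly V * E * I) $ N =
      (- 1) ^ Suc k * c * of_nat ((Suc k + N) choose N) + rat_fps (- W) Q $ N" for N
    unfolding decomp rat_fps_eq_mult_inverse[OF \<open>poly Q 0 \<noteq> 0\<close>]
    by (simp add: E_def I_def fps_nth_inverse_one_minus_X_power flip: power_Suc2 del: power_Suc)
  finally have "(\<Sum>n\<le>N. rat_fps V Q $ n) =
      (- 1) ^ Suc k * c * of_nat ((Suc k + N) choose N) + rat_fps (- W) Q $ N" for N .
  moreover have "(- 1) ^ Suc k * c \<noteq> 0"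
    using assms(3,4) by (simp add: c_def)
  ultimately show ?thesis by (rule that[rotated])
qed

lemma partial_sums_ratio_tendsto:
  fixes P Q p q :: "complex poly"
  assumes "poly Q 1 = 0" "poly P 1 \<noteq> 0" "poly q 1 \<noteq> 0"
    and "\<And>z. poly Q z = 0 \<Longrightarrow> cmod z \<ge> 1"
    and "\<And>z. poly Q z = 0 \<Longrightarrow> order z Q \<le> order 1 Q"
  shows "(\<lambda>N. (\<Sum>n\<le>N. (fps_of_poly p * rat_fps P Q) $ n) /
      (\<Sum>n\<le>N. (fps_of_poly q * rat_fps P Q) $ n)) \<longlonglongrightarrow> poly p 1 / poly q 1"
proof -
  have "poly Q 0 \<noteq> 0" using assms(4)[of 0] by auto
  then have "Q \<noteq> 0" by auto
  then obtain k where k: "order 1 Q = Suc k"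
    using assms(1) order_root[of Q 1] gr0_conv_Suc by auto
  with \<open>Q \<noteq> 0\<close> obtain Q0 where Q: "Q = [:-1, 1:] ^ Suc k * Q0" and "\<not> [:-1, 1:] dvd Q0"
    by (metis order_decomp)
  then have "poly Q0 1 \<noteq> 0" "poly Q0 0 \<noteq> 0"
    using \<open>poly Q 0 \<noteq> 0\<close> by (auto simp: poly_eq_0_iff_dvd)
  have growth: "poly_growth k (fps_nth (rat_fps R Q))" for R
    using assms(4,5) \<open>poly Q 0 \<noteq> 0\<close> by (intro poly_growth_rat_fps) (auto simp: k)
  have mult: "fps_of_poly r * rat_fps P Q = rat_fps (r * P) Q" for r
    using \<open>poly Q 0 \<noteq> 0\<close> by (simp add: rat_fps_eq_mult_inverse fps_of_poly_mult mult.assoc)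
  obtain R where R: "\<And>N. poly (q * P) 1 * (\<Sum>n\<le>N. rat_fps (p * P) Q $ n) -
      poly (p * P) 1 * (\<Sum>n\<le>N. rat_fps (q * P) Q $ n) = rat_fps R Q $ N"
    using partial_sums_rat_fps_cross_difference[OF \<open>poly Q 0 \<noteq> 0\<close>, where U = "p * P" and V = "q * P"]
    by blast
  have "poly (q * P) 1 \<noteq> 0" using assms(2,3) by simp
  then obtain c W where "c \<noteq> 0" and denominator:
    "\<And>N. (\<Sum>n\<le>N. rat_fps (q * P) Q $ n) = c * of_nat ((Suc k + N) choose N) + rat_fps W Q $ N"
    using partial_sums_rat_fps_pole_at_1[OF Q \<open>poly Q0 0 \<noteq> 0\<close> \<open>poly Q0 1 \<noteq> 0\<close>] by blast
  have "(\<lambda>N. (\<Sum>n\<le>N. rat_fps (p * P) Q $ n) / (\<Sum>n\<le>N. rat_fps (q * P) Q $ n)) \<longlonglongrightarrow>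
      poly (p * P) 1 / poly (q * P) 1"
  proof (rule tendsto_ratio_binomial_denominator)
    show "poly_growth k (\<lambda>N. poly (q * P) 1 * (\<Sum>n\<le>N. rat_fps (p * P) Q $ n) -
        poly (p * P) 1 * (\<Sum>n\<le>N. rat_fps (q * P) Q $ n))"
      using growth[of R] by (simp only: R)
  qed (use growth[of W] denominator \<open>c \<noteq> 0\<close> \<open>poly (q * P) 1 \<noteq> 0\<close> in auto)
  then show ?thesis
    using assms(2) by (simp add: mult)
qed

theorem mainTheorem9:
  fixes P Q p q :: "complex poly"
  assumes reduced: "coprime P Q"
    and regular: "\<forall>z. cmod z < 1 \<longrightarrow> poly Q z \<noteq> 0"
    and pole1: "poly Q 1 = 0"
    and maxorder: "\<forall>z. poly Q z = 0 \<longrightarrow> order z Q \<le> order 1 Q"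
    and q1: "poly q 1 \<noteq> 0"
  defines "sf \<equiv> (\<lambda>t. poly p t * rat_fun P Q t)"
    and "df \<equiv> (\<lambda>t. poly q t * rat_fun P Q t)"
    and "s \<equiv> fps_nth (fps_of_poly p * rat_fps P Q)"
    and "d \<equiv> fps_nth (fps_of_poly q * rat_fps P Q)"
  shows "((\<lambda>x::real. sf (of_real x) / df (of_real x)) \<longlongrightarrow> poly p 1 / poly q 1) (at_left 1) \<and>
         (\<lambda>N. (\<Sum>n\<le>N. s n) / (\<Sum>n\<le>N. d n)) \<longlonglongrightarrow> poly p 1 / poly q 1"
proof -
  have P1: "poly P 1 \<noteq> 0"
    using reduced pole1 by (rule poly_nonzero_if_coprime_root)
  have roots: "cmod z \<ge> 1" if "poly Q z = 0" for z
    using regular that by (meson not_le)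
  show ?thesis
    unfolding sf_def df_def s_def d_def
  proof
    show "((\<lambda>x::real. poly p (of_real x) * rat_fun P Q (of_real x) /
        (poly q (of_real x) * rat_fun P Q (of_real x))) \<longlongrightarrow> poly p 1 / poly q 1) (at_left 1)"
      using regular by (intro rat_fun_ratio_tendsto_at_left_1 P1 q1) auto
    show "(\<lambda>N. (\<Sum>n\<le>N. (fps_of_poly p * rat_fps P Q) $ n) /
        (\<Sum>n\<le>N. (fps_of_poly q * rat_fps P Q) $ n)) \<longlonglongrightarrow> poly p 1 / poly q 1"
      using maxorder by (intro partial_sums_ratio_tendsto pole1 P1 q1 roots) auto
  qed
qed

end
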